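(* Let $n=ks\ge 2$ with $k,s$ positive integers and $k<n$, and let $\mathcal{C}$ be an optimum distance full flag code on $\mathbb{F}_q^n$ whose $k$-projected code $\mathcal{C}_k$ is a $k$-spread of $\mathbb{F}_q^n$. If $n\neq 3$, then $s=2$.
   Context: $q$ is a prime power. For subspaces $\mathcal{U},\mathcal{V}$ of $\mathbb{F}_q^n$, $d_S(\mathcal{U},\mathcal{V})=\dim(\mathcal{U}+\mathcal{V})-\dim(\mathcal{U}\cap\mathcal{V})$. A full flag on $\mathbb{F}_q^n$ is a tuple $(\mathcal{F}_1,\ldots,\mathcal{F}_{n-1})$ of subspaces with $\mathcal{F}_1\subsetneq\cdots\subsetneq\mathcal{F}_{n-1}$ and $\dim\mathcal{F}_i=i$. A full flag code is a set $\mathcal{C}$ of at least two full flags; its distance $d_f(\mathcal{C})$ is the minimum over distinct $\mathcal{F},\mathcal{F}'\in\mathcal{C}$ of $\sum_i d_S(\mathcal{F}_i,\mathcal{F}'_i)$; it is an optimum distance full flag code if $d_f(\mathcal{C})=2\left(\sum_{i\le\lfloor n/2\rfloor} i+\sum_{i>\lfloor n/2\rfloor}^{n-1}(n-i)\right)$. The $i$-projected code is $\mathcal{C}_i=\{\mathcal{F}_i:\mathcal{F}\in\mathcal{C}\}$. A $k$-spread of $\mathbb{F}_q^n$ ($k\mid n$) is a set of $k$-dimensional subspaces pairwise intersecting trivially, of cardinality $(q^n-1)/(q^k-1)$ (equivalently, partitioning the nonzero vectors of $\mathbb{F}_q^n$). *)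

theory Defs
  imports "HOL-Analysis.Analysis"
begin

text \<open>Ambient space: F_q^n is 'a^'n with 'a a finite field (q = CARD('a)) and n = CARD('n).
  A full flag is a list of length n-1 whose entry at position i-1 is the i-dimensional space F_i.\<close>

definition subspace_distance :: "('a::field ^ 'n) set \<Rightarrow> ('a ^ 'n) set \<Rightarrow> nat" where
  "subspace_distance U V = vec.dim (vec.span (U \<union> V)) - vec.dim (U \<inter> V)"

definition full_flag :: "('a::field ^ 'n) set list \<Rightarrow> bool" where
  "full_flag F \<longleftrightarrow> length F = CARD('n) - 1 \<and>
     (\<forall>i < CARD('n) - 1. vec.subspace (F ! i) \<and> vec.dim (F ! i) = i + 1) \<and>
     (\<forall>i. i + 1 < CARD('n) - 1 \<longrightarrow> F ! i \<subset> F ! (i + 1))"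

definition flag_distance :: "('a::field ^ 'n) set list \<Rightarrow> ('a ^ 'n) set list \<Rightarrow> nat" where
  "flag_distance F F' = (\<Sum>i < CARD('n) - 1. subspace_distance (F ! i) (F' ! i))"

definition full_flag_code :: "('a::field ^ 'n) set list set \<Rightarrow> bool" where
  "full_flag_code C \<longleftrightarrow> (\<forall>F\<in>C. full_flag F) \<and> finite C \<and> card C \<ge> 2"

definition flag_code_distance :: "('a::field ^ 'n) set list set \<Rightarrow> nat" where
  "flag_code_distance C = Min {flag_distance F F' | F F'. F \<in> C \<and> F' \<in> C \<and> F \<noteq> F'}"

definition optimum_distance_full_flag_code :: "('a::field ^ 'n) set list set \<Rightarrow> bool" where
  "optimum_distance_full_flag_code C \<longleftrightarrow> full_flag_code C \<and>
     flag_code_distance C = 2 * ((\<Sum>i = 1 .. CARD('n) div 2. i)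
                               + (\<Sum>i = CARD('n) div 2 + 1 .. CARD('n) - 1. CARD('n) - i))"

definition projected_code :: "('a::field ^ 'n) set list set \<Rightarrow> nat \<Rightarrow> ('a ^ 'n) set set" where
  "projected_code C i = (\<lambda>F. F ! (i - 1)) ` C"

definition is_spread :: "nat \<Rightarrow> ('a::{finite,field} ^ 'n) set set \<Rightarrow> bool" where
  "is_spread k S \<longleftrightarrow> k dvd CARD('n) \<and>
     (\<forall>U\<in>S. vec.subspace U \<and> vec.dim U = k) \<and>
     (\<forall>U\<in>S. \<forall>V\<in>S. U \<noteq> V \<longrightarrow> U \<inter> V = {0}) \<and>
     card S = (CARD('a) ^ CARD('n) - 1) div (CARD('a) ^ k - 1)"

end

theory Submission
  imports Defs
begin

text \<open>Two distinct flags of an optimum distance code are at maximal subspace distance in every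
  dimension, so their \<open>(k+1)\<close>-dimensional members intersect trivially as soon as
  \<open>2(k+1) \<le> n\<close>, which for \<open>s \<noteq> 2\<close> is guaranteed by \<open>s \<ge> 3\<close> and \<open>n \<noteq> 3\<close>. The
  \<open>(k+1)\<close>-spaces of the code then cover pairwise disjoint sets of nonzero vectors, whence
  \<open>|C| (q^(k+1) - 1) \<le> q^n - 1\<close>; but \<open>|C| \<ge> |C\<^sub>k|\<close> is the spread size
  \<open>(q^n - 1)/(q^k - 1)\<close>, which is too large.\<close>

lemma dim_span_Un_add_dim_Int:
  fixes U V :: "('a::field ^ 'n) set"
  assumes "vec.subspace U" "vec.subspace V"
  shows "vec.dim (vec.span (U \<union> V)) + vec.dim (U \<inter> V) = vec.dim U + vec.dim V"
proof -
  have spans: "vec.span U = U" "vec.span V = V"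
    using assms by (simp_all add: vec.span_eq_iff)
  have "vec.span (U \<union> V) = {x + y |x y. x \<in> U \<and> y \<in> V}"
    unfolding vec.span_Un spans ..
  then show ?thesis using vec.dim_sums_Int[OF assms] by simp
qed

lemma subspace_distance_le:
  fixes U V :: "('a::field ^ 'n) set"
  assumes "vec.subspace U" "vec.subspace V" "vec.dim U = d" "vec.dim V = d"
  shows "subspace_distance U V \<le> 2 * min d (CARD('n) - d)"
  using dim_span_Un_add_dim_Int[OF assms(1,2)] dim_subset_UNIV_cart_gen[of "vec.span (U \<union> V)"]
    assms(3,4)
  unfolding subspace_distance_def by linarith

lemma Int_eq_zero_if_subspace_distance_eq_add_dim:
  fixes U V :: "('a::field ^ 'n) set"
  assumes "vec.subspace U" "vec.subspace V"
    and "subspace_distance U V = vec.dim U + vec.dim V"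
  shows "U \<inter> V = {0}"
proof -
  have "vec.dim (U \<inter> V) = 0"
    using dim_span_Un_add_dim_Int[OF assms(1,2)] assms(3) unfolding subspace_distance_def
    by linarith
  moreover have "0 \<in> U \<inter> V" using assms(1,2) vec.subspace_0 by blast
  ultimately show ?thesis by auto
qed

lemma card_subspace_ge:
  fixes U :: "('a::{finite,field} ^ 'n) set"
  assumes "vec.subspace U"
  shows "CARD('a) ^ vec.dim U \<le> card U"
proof -
  obtain B where B: "B \<subseteq> U" "vec.independent B" "card B = vec.dim U"
    using vec.basis_exists by metis
  define combination where "combination = (\<lambda>c. \<Sum>b\<in>B. c b *s b)"
  have independent: "\<forall>b\<in>B. e b = 0" if "(\<Sum>b\<in>B. e b *s b) = 0" for e
    using vec.independent_explicit B(2) that by blast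
  have "inj_on combination (B \<rightarrow>\<^sub>E UNIV)"
  proof (rule inj_onI)
    fix c d assume c: "c \<in> B \<rightarrow>\<^sub>E UNIV" and d: "d \<in> B \<rightarrow>\<^sub>E UNIV"
      and "combination c = combination d"
    then have "(\<Sum>b\<in>B. (c b - d b) *s b) = 0"
      unfolding combination_def by (simp add: vec.scale_left_diff_distrib sum_subtractf)
    then have "\<forall>b\<in>B. c b - d b = 0" by (rule independent)
    then show "c = d" using c d by (auto simp: PiE_def extensional_def fun_eq_iff)
  qed
  moreover have "combination ` (B \<rightarrow>\<^sub>E UNIV) \<subseteq> U"
    unfolding combination_def using B(1) assms
    by (auto intro!: vec.subspace_sum vec.subspace_scale)
  moreover have "finite B" using B(2) vec.finiteI_independent by blast
  ultimately show ?thesis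
    using card_mono[OF finite, of "combination ` (B \<rightarrow>\<^sub>E UNIV)" U] B(3)
    by (simp add: card_image card_PiE)
qed

lemma card_mult_le_if_pairwise_Int_zero:
  fixes S :: "('a::{finite,field} ^ 'n) set set"
  assumes "\<And>U. U \<in> S \<Longrightarrow> vec.subspace U \<and> vec.dim U = d"
    and "\<And>U V. U \<in> S \<Longrightarrow> V \<in> S \<Longrightarrow> U \<noteq> V \<Longrightarrow> U \<inter> V = {0}"
  shows "card S * (CARD('a) ^ d - 1) \<le> CARD('a) ^ CARD('n) - 1"
proof -
  have "card S * (CARD('a) ^ d - 1) \<le> (\<Sum>U\<in>S. card (U - {0}))"
  proof -
    have "CARD('a) ^ d - 1 \<le> card (U - {0})" if "U \<in> S" for U
      using card_subspace_ge[of U] assms(1)[OF that] vec.subspace_0[of U]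
      by (simp add: card_Diff_singleton)
    then show ?thesis using sum_mono[of S "\<lambda>_. CARD('a) ^ d - 1"] by (simp add: mult.commute)
  qed
  also have "\<dots> = card (\<Union>U\<in>S. U - {0})"
    using assms(2) by (intro card_UN_disjoint[symmetric]) auto
  also have "\<dots> \<le> card (UNIV - {0 :: 'a ^ 'n})"
    by (intro card_mono) auto
  also have "\<dots> = CARD('a) ^ CARD('n) - 1"
    by (simp add: card_Diff_singleton)
  finally show ?thesis .
qed

lemma optimum_distance_eq_sum_min:
  fixes n :: nat
  shows "2 * ((\<Sum>i = 1 .. n div 2. i) + (\<Sum>i = n div 2 + 1 .. n - 1. n - i))
         = (\<Sum>i < n - 1. 2 * min (Suc i) (n - Suc i))"
proof -
  have "(\<Sum>i < n - 1. 2 * min (Suc i) (n - Suc i)) = (\<Sum>i = Suc 0 .. n - 1. 2 * min i (n - i))"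
    by (rule sum.atLeast1_atMost_eq[symmetric])
  also have "{Suc 0 .. n - 1} = {1 .. n div 2} \<union> {n div 2 + 1 .. n - 1}" by auto
  also have "(\<Sum>i \<in> {1 .. n div 2} \<union> {n div 2 + 1 .. n - 1}. 2 * min i (n - i))
     = (\<Sum>i = 1 .. n div 2. 2 * min i (n - i)) + (\<Sum>i = n div 2 + 1 .. n - 1. 2 * min i (n - i))"
    by (rule sum.union_disjoint) auto
  also have "(\<Sum>i = 1 .. n div 2. 2 * min i (n - i)) = (\<Sum>i = 1 .. n div 2. 2 * i)"
    by (rule sum.cong) auto
  also have "(\<Sum>i = n div 2 + 1 .. n - 1. 2 * min i (n - i)) = (\<Sum>i = n div 2 + 1 .. n - 1. 2 * (n - i))"
    by (rule sum.cong) auto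
  finally show ?thesis by (simp add: sum_distrib_left)
qed

lemma flag_code_distance_le:
  assumes "finite C" "F \<in> C" "F' \<in> C" "F \<noteq> F'"
  shows "flag_code_distance C \<le> flag_distance F F'"
proof -
  let ?distances = "{flag_distance F F' | F F'. F \<in> C \<and> F' \<in> C \<and> F \<noteq> F'}"
  have "?distances \<subseteq> (\<lambda>(F, F'). flag_distance F F') ` (C \<times> C)"
    by auto
  then have "finite ?distances"
    by (rule finite_subset) (use assms(1) in simp)
  then show ?thesis
    unfolding flag_code_distance_def using assms(2-4) by (intro Min_le) auto
qed

lemma full_flag_nth:
  assumes "full_flag F" "i < CARD('n) - 1"
  shows "vec.subspace (F ! i :: ('a::field ^ 'n) set)" "vec.dim (F ! i) = Suc i"
  using assms unfolding full_flag_def by auto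

lemma optimum_distance_full_flag_codeD:
  assumes "optimum_distance_full_flag_code C"
  shows "finite C" "F \<in> C \<Longrightarrow> full_flag F"
  using assms unfolding optimum_distance_full_flag_code_def full_flag_code_def by auto

lemma optimum_distance_flag_code_subspace_distance:
  fixes C :: "('a::field ^ 'n) set list set"
  assumes "optimum_distance_full_flag_code C" "F \<in> C" "F' \<in> C" "F \<noteq> F'"
    and "i < CARD('n) - 1"
  shows "subspace_distance (F ! i) (F' ! i) = 2 * min (Suc i) (CARD('n) - Suc i)"
proof -
  let ?bound = "\<lambda>i. 2 * min (Suc i) (CARD('n) - Suc i)"
  have flags: "full_flag F" "full_flag F'"
    using assms(1-3) by (auto intro: optimum_distance_full_flag_codeD)
  have le: "subspace_distance (F ! j) (F' ! j) \<le> ?bound j" if "j \<in> {..< CARD('n) - 1}" for j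
    using flags that by (intro subspace_distance_le) (auto simp: full_flag_nth)
  have "(\<Sum>j < CARD('n) - 1. ?bound j) = flag_code_distance C"
    using assms(1) unfolding optimum_distance_full_flag_code_def optimum_distance_eq_sum_min
    by simp
  also have "\<dots> \<le> flag_distance F F'"
    using optimum_distance_full_flag_codeD(1)[OF assms(1)] assms(2-4)
    by (rule flag_code_distance_le)
  moreover have "flag_distance F F' \<le> (\<Sum>j < CARD('n) - 1. ?bound j)"
    unfolding flag_distance_def using le by (rule sum_mono)
  ultimately have "(\<Sum>j < CARD('n) - 1. subspace_distance (F ! j) (F' ! j))
                = (\<Sum>j < CARD('n) - 1. ?bound j)"
    unfolding flag_distance_def by linarith
  then show ?thesis by (rule sum_mono_inv) (use le assms(5) in auto)
qed

lemma optimum_distance_flag_code_Int_eq_zero: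
  fixes C :: "('a::field ^ 'n) set list set"
  assumes "optimum_distance_full_flag_code C" "F \<in> C" "F' \<in> C" "F \<noteq> F'"
    and "2 * Suc i \<le> CARD('n)"
  shows "F ! i \<inter> F' ! i = {0}"
proof -
  have "i < CARD('n) - 1" using assms(5) by simp
  moreover have "full_flag F" "full_flag F'"
    using assms(1-3) by (auto intro: optimum_distance_full_flag_codeD)
  moreover have "subspace_distance (F ! i) (F' ! i) = 2 * Suc i"
    using optimum_distance_flag_code_subspace_distance[OF assms(1-4) \<open>i < CARD('n) - 1\<close>]
      assms(5) by simp
  ultimately show ?thesis
    by (intro Int_eq_zero_if_subspace_distance_eq_add_dim) (simp_all add: full_flag_nth)
qed

lemma optimum_distance_flag_code_inj_on_nth:
  fixes C :: "('a::field ^ 'n) set list set"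
  assumes "optimum_distance_full_flag_code C" "2 * Suc i \<le> CARD('n)"
  shows "inj_on (\<lambda>F. F ! i) C"
proof (rule inj_onI, rule ccontr)
  fix F F' assume F: "F \<in> C" "F' \<in> C" "F ! i = F' ! i" "F \<noteq> F'"
  then have "F ! i \<subseteq> {0}"
    using optimum_distance_flag_code_Int_eq_zero[OF assms(1) F(1,2,4) assms(2)] by simp
  then have "vec.dim (F ! i) = 0" by simp
  moreover have "vec.dim (F ! i) = Suc i"
    using optimum_distance_full_flag_codeD(2)[OF assms(1) F(1)] assms(2) by (simp add: full_flag_nth)
  ultimately show False by simp
qed

lemma two_le_card_field: "2 \<le> CARD('a::{finite,field})"
proof -
  have "card {0 :: 'a, 1} \<le> CARD('a)" by (rule card_mono) auto
  then show ?thesis by simp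
qed

lemma spread_size_mult_gt:
  fixes q k n :: nat
  assumes "2 \<le> q" "0 < k" "k < n"
  shows "q ^ n - 1 < (q ^ n - 1) div (q ^ k - 1) * (q ^ Suc k - 1)"
proof -
  define m where "m = (q ^ n - 1) div (q ^ k - 1)"
  have "q \<le> q ^ k" using assms by (simp add: self_le_power)
  then have A: "2 \<le> q ^ k" using assms(1) by linarith
  have "q ^ k \<le> q ^ n" using assms by (intro power_increasing) auto
  then have "0 < m" unfolding m_def using A by (simp add: div_greater_zero_iff)
  have "q ^ k \<le> m * ((q - 1) * q ^ k)"
    using mult_le_mono[of 1 m 1 "(q - 1) * q ^ k"] \<open>0 < m\<close> assms(1) by simp
  have "q ^ n - 1 = m * (q ^ k - 1) + (q ^ n - 1) mod (q ^ k - 1)"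
    unfolding m_def by (rule div_mult_mod_eq[symmetric])
  also have "\<dots> < m * (q ^ k - 1) + (q ^ k - 1)"
    using A by (intro add_strict_left_mono mod_less_divisor) simp
  also have "\<dots> < m * (q ^ k - 1) + m * ((q - 1) * q ^ k)"
    using \<open>q ^ k \<le> m * ((q - 1) * q ^ k)\<close> A by linarith
  also have "\<dots> = m * (q ^ Suc k - 1)"
    using assms(1) A by (simp add: algebra_simps diff_mult_distrib)
  finally show ?thesis unfolding m_def .
qed

theorem proposition4p1:
  fixes C :: "('a::{finite,field} ^ 'n) set list set"
    and k s :: nat
  assumes "CARD('n) = k * s" and "CARD('n) \<ge> 2"
    and "k > 0" and "s > 0" and "k < CARD('n)"
    and "optimum_distance_full_flag_code C"
    and "is_spread k (projected_code C k)"
    and "CARD('n) \<noteq> 3"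
  shows "s = 2"
proof (rule ccontr)
  assume "s \<noteq> 2"
  let ?q = "CARD('a)" and ?n = "CARD('n)"
  have "3 \<le> s" using assms(1,4,5) \<open>s \<noteq> 2\<close> by (cases "s = 1") auto
  then have "3 * k \<le> ?n" using assms(1) by simp
  have small: "2 * Suc k \<le> ?n"
  proof (cases "k = 1")
    case True
    then show ?thesis using assms(1,8) \<open>3 \<le> s\<close> by simp
  next
    case False
    then show ?thesis using \<open>3 * k \<le> ?n\<close> assms(3) by simp
  qed
  note flags = optimum_distance_full_flag_codeD[OF assms(6)]
  have "card C * (?q ^ Suc k - 1) \<le> ?q ^ ?n - 1"
  proof -
    have "card ((\<lambda>F. F ! k) ` C) * (?q ^ Suc k - 1) \<le> ?q ^ ?n - 1"
      using small flags(2) optimum_distance_flag_code_Int_eq_zero[OF assms(6) _ _ _ small]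
      by (intro card_mult_le_if_pairwise_Int_zero) (auto simp: full_flag_nth)
    then show ?thesis
      using optimum_distance_flag_code_inj_on_nth[OF assms(6) small] by (simp add: card_image)
  qed
  moreover have "(?q ^ ?n - 1) div (?q ^ k - 1) \<le> card C"
    using assms(7) card_image_le[OF flags(1), of "\<lambda>F. F ! (k - 1)"]
    by (simp add: is_spread_def projected_code_def)
  ultimately have "(?q ^ ?n - 1) div (?q ^ k - 1) * (?q ^ Suc k - 1) \<le> ?q ^ ?n - 1"
    by (meson le_trans mult_le_mono1)
  then show False
    using spread_size_mult_gt[OF two_le_card_field[where 'a='a] assms(3,5)] by linarith
qed

end
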